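(* Let $\alpha\in\mathbb{C}$ with $\Re(\alpha)>-1/2$ (so that also $\Re(\alpha+1)>-1/2$). Then the canonical forms of the dual sequences satisfy $$x\,u_0(\alpha)=\frac{\alpha^2}{2\alpha+1}\,u_0(\alpha+1).$$
   Context: Let $\mathcal{A}$ be the differential operator $\mathcal{A}f(x)=-x^2f''(x)-xf'(x)+x^2f(x)$ with iterates $\mathcal{A}^n$. For $\Re(\alpha)>-1/2$, $p_n(x;\alpha)=(-1)^n e^{x}x^{-\alpha}\mathcal{A}^n(e^{-x}x^{\alpha})$ is a polynomial of degree $n$ with leading coefficient $(-2)^n(\alpha+1/2)_n$, and $P_n(x;\alpha)=p_n(x;\alpha)/\big((-2)^n(\alpha+1/2)_n\big)$. $u_0(\alpha)$ is the linear functional on complex polynomials determined by $\langle u_0(\alpha),P_k(\cdot;\alpha)\rangle=\delta_{0,k}$, $k\ge0$; for a polynomial $g$, $gu$ denotes the form $f\mapsto\langle u,gf\rangle$. *)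

theory Defs
  imports "HOL-Analysis.Analysis" "HOL-Computational_Algebra.Polynomial"
begin

definition opA :: "(complex \<Rightarrow> complex) \<Rightarrow> complex \<Rightarrow> complex" where
  "opA f = (\<lambda>x. - (x^2 * deriv (deriv f) x) - x * deriv f x + x^2 * f x)"

text \<open>The weight e^{-x} x^alpha (principal branch, holomorphic off the nonpositive reals).\<close>
definition wgt :: "complex \<Rightarrow> complex \<Rightarrow> complex" where
  "wgt \<alpha> = (\<lambda>x. exp (- x) * x powr \<alpha>)"

definition pn :: "nat \<Rightarrow> complex \<Rightarrow> complex poly" where
  "pn n \<alpha> = (THE q. \<forall>x::real. x > 0 \<longrightarrow>
      poly q (of_real x) = (-1)^n * exp (of_real x) * (of_real x) powr (- \<alpha>)
                           * (opA ^^ n) (wgt \<alpha>) (of_real x))"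

text \<open>Monic normalisation P_n = p_n / ((-2)^n (alpha+1/2)_n).\<close>
definition Pn :: "nat \<Rightarrow> complex \<Rightarrow> complex poly" where
  "Pn n \<alpha> = smult (inverse ((-2)^n * pochhammer (\<alpha> + 1/2) n)) (pn n \<alpha>)"

definition u0 :: "complex \<Rightarrow> complex poly \<Rightarrow> complex" where
  "u0 \<alpha> = (THE u. (\<forall>f g. u (f + g) = u f + u g) \<and> (\<forall>c f. u (smult c f) = c * u f)
                 \<and> (\<forall>k. u (Pn k \<alpha>) = (if k = 0 then 1 else 0)))"

end

theory Submission imports Defs begin

(*
  (1) Writing w_a(x) = e^(-x) x^a, one has d/dx (w_a p) = w_(a-1) T_a p with the "twisted
      derivative" T_a p = x p' + a p - x p, and hence A (w_a q) = - w_a L_a q with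
      L_a = T_a T_a - x^2.  So p_n(x;a) is the polynomial L_a^n 1.
  (2) L_a (x h) = x L_(a+1) h, which yields the three-term relation
        (2a+1) x p_k(a+1) = a^2 p_k(a) - p_(k+1)(a);
      moreover p_n(a) has degree n and leading coefficient (-2)^n (a+1/2)_n.
  (3) For a family Q_k of monic polynomials with deg Q_k = k there is exactly one linear form
      taking the values delta_(0,k) on it; it is built from its moments.
  (4) The forms f |-> u0(a)(x f) and f |-> a^2/(2a+1) u0(a+1)(f) are linear and, by (2),
      agree on the basis P_k(.;a+1); by the uniqueness in (3) they are equal.
*)

section \<open>The polynomial operators behind p_n\<close>

text \<open>The derivative of e^(-x) x^a p(x) is e^(-x) x^(a-1) (T_a p)(x).\<close>
definition tw_deriv :: "'a::idom \<Rightarrow> 'a poly \<Rightarrow> 'a poly" where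
  "tw_deriv a p = [:0, 1:] * pderiv p + smult a p - [:0, 1:] * p"

text \<open>The operator A acts on e^(-x) x^a q(x) as multiplication of e^(-x) x^a by -(L_a q).\<close>
definition lop :: "'a::idom \<Rightarrow> 'a poly \<Rightarrow> 'a poly" where
  "lop a p = tw_deriv a (tw_deriv a p) - [:0, 0, 1:] * p"

text \<open>The polynomials L_a^n 1; they will turn out to be the p_n(x;a).\<close>
definition ppoly :: "nat \<Rightarrow> 'a::idom \<Rightarrow> 'a poly" where
  "ppoly n a = (lop a ^^ n) 1"

lemma ppoly_Suc: "ppoly (Suc n) a = lop a (ppoly n a)"
  by (simp add: ppoly_def)

lemma mult_X_pCons: "[:0, 1:] * p = pCons 0 (p :: 'a::comm_semiring_1 poly)"
  by (simp add: mult_pCons_left smult_1_left)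

lemma mult_X2_pCons: "[:0, 0, 1:] * p = pCons 0 (pCons 0 (p :: 'a::comm_semiring_1 poly))"
  by (simp add: mult_pCons_left smult_1_left)

lemma tw_deriv_mult_X: "tw_deriv a ([:0, 1:] * h) = [:0, 1:] * tw_deriv (a + 1) h"
  by (simp add: tw_deriv_def pderiv_mult pderiv_pCons algebra_simps smult_add_left)

lemma lop_mult_X: "lop a ([:0, 1:] * h) = [:0, 1:] * lop (a + 1) h"
  by (simp only: lop_def tw_deriv_mult_X mult.left_commute[of "[:0, 0, 1:]"] right_diff_distrib)

lemma tw_deriv_diff: "tw_deriv a (p - q) = tw_deriv a p - tw_deriv a q"
  by (simp add: tw_deriv_def pderiv_diff algebra_simps smult_diff_right)

lemma tw_deriv_smult: "tw_deriv a (smult c p) = smult c (tw_deriv a p)"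
  by (simp add: tw_deriv_def pderiv_smult algebra_simps smult_diff_right smult_add_right)

lemma lop_diff: "lop a (p - q) = lop a p - lop a q"
  by (simp add: lop_def tw_deriv_diff algebra_simps)

lemma lop_smult: "lop a (smult c p) = smult c (lop a p)"
  by (simp add: lop_def tw_deriv_smult smult_diff_right)

lemma ppoly_1: "ppoly 1 a = [:a^2, - (2 * a + 1):]"
  by (simp add: ppoly_def lop_def tw_deriv_def pderiv_pCons mult_X_pCons mult_X2_pCons
      algebra_simps power2_eq_square)

lemma ppoly_shift_relation:
  "smult (2 * a + 1) ([:0, 1:] * ppoly k (a + 1)) = smult (a^2) (ppoly k a) - ppoly (Suc k) a"
proof (induction k)
  case 0
  show ?case using ppoly_1[of a] by (simp add: ppoly_def mult_X_pCons)
next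
  case (Suc k)
  have "smult (2 * a + 1) ([:0, 1:] * ppoly (Suc k) (a + 1))
        = lop a (smult (2 * a + 1) ([:0, 1:] * ppoly k (a + 1)))"
    by (simp only: ppoly_Suc lop_mult_X lop_smult mult_smult_right)
  also have "\<dots> = smult (a^2) (ppoly (Suc k) a) - ppoly (Suc (Suc k)) a"
    by (simp only: Suc lop_diff lop_smult ppoly_Suc)
  finally show ?case .
qed

lemma coeff_tw_deriv_0: "coeff (tw_deriv a p) 0 = a * coeff p 0"
  by (simp add: tw_deriv_def mult_X_pCons coeff_pderiv)

lemma coeff_tw_deriv_Suc:
  "coeff (tw_deriv a p) (Suc k) = (of_nat (Suc k) + a) * coeff p (Suc k) - coeff p k"
  by (simp add: tw_deriv_def mult_X_pCons coeff_pderiv algebra_simps)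

lemma coeff_lop_Suc:
  "coeff (lop a p) (Suc k)
     = (of_nat (Suc k) + a)^2 * coeff p (Suc k) - (2 * of_nat k + 2 * a + 1) * coeff p k"
  by (cases k) (simp_all add: lop_def coeff_tw_deriv_0 coeff_tw_deriv_Suc mult_X2_pCons
      power2_eq_square algebra_simps)

lemma ppoly_coeff:
  fixes a :: "'a::field_char_0"
  shows "coeff (ppoly n a) n = (-2)^n * pochhammer (a + 1/2) n
         \<and> (\<forall>j>n. coeff (ppoly n a) j = 0)"
proof (induction n)
  case 0
  then show ?case by (auto simp: ppoly_def coeff_1)
next
  case (Suc n)
  have "coeff (ppoly (Suc n) a) (Suc n)
        = - (2 * of_nat n + 2 * a + 1) * ((-2)^n * pochhammer (a + 1/2) n)"
    using Suc by (simp add: ppoly_Suc coeff_lop_Suc algebra_simps)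
  also have "\<dots> = (-2)^(Suc n) * pochhammer (a + 1/2) (Suc n)"
    by (simp add: pochhammer_Suc algebra_simps)
  finally have lead:
    "coeff (ppoly (Suc n) a) (Suc n) = (-2)^(Suc n) * pochhammer (a + 1/2) (Suc n)" .
  have "coeff (ppoly (Suc n) a) j = 0" if "j > Suc n" for j
  proof -
    obtain k where "j = Suc k" "k > n" using \<open>j > Suc n\<close> by (cases j) auto
    then show ?thesis using Suc by (simp add: ppoly_Suc coeff_lop_Suc)
  qed
  with lead show ?case by blast
qed

section \<open>Identification of p_n with L_a^n 1\<close>

lemma powr_minus_one_shift: "(z::complex) \<noteq> 0 \<Longrightarrow> z powr b = z * z powr (b - 1)"
  using powr_add[of z 1 "b - 1"] by simp

lemma weighted_poly_deriv:
  assumes "Re z > 0"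
  shows "deriv (\<lambda>z. c * (exp (-z) * z powr b * poly r z)) z
         = c * (exp (-z) * z powr (b - 1) * poly (tw_deriv b r) z)"
proof -
  have nz: "z \<notin> \<real>\<^sub>\<le>\<^sub>0" using assms by (auto simp: complex_nonpos_Reals_iff)
  have "((\<lambda>z. exp (-z) * z powr b * poly r z) has_field_derivative
      (- exp (-z)) * z powr b * poly r z + exp (-z) * (b * z powr (b - 1)) * poly r z
        + exp (-z) * z powr b * poly (pderiv r) z) (at z)"
    using nz by (auto intro!: derivative_eq_intros has_field_derivative_powr[OF nz] poly_DERIV
        simp: algebra_simps)
  moreover have "(- exp (-z)) * z powr b * poly r z + exp (-z) * (b * z powr (b - 1)) * poly r z
        + exp (-z) * z powr b * poly (pderiv r) z = exp (-z) * z powr (b - 1) * poly (tw_deriv b r) z"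
    using assms by (subst (1 2) powr_minus_one_shift[of z b]) (auto simp: tw_deriv_def algebra_simps)
  ultimately show ?thesis by (intro DERIV_imp_deriv DERIV_cmult) simp
qed

lemma eventually_right_half_plane: "Re z > 0 \<Longrightarrow> eventually (\<lambda>w. Re w > 0) (nhds z)"
  using eventually_nhds_in_open[OF open_halfspace_Re_gt, of z 0] by simp

lemma opA_weighted_poly:
  assumes F: "\<And>w. Re w > 0 \<Longrightarrow> F w = c * (exp (-w) * w powr a * poly q w)" and z: "Re z > 0"
  shows "opA F z = - c * (exp (-z) * z powr a * poly (lop a q) z)"
proof -
  have z0: "z \<noteq> 0" using z by auto
  have dF: "deriv F w = c * (exp (-w) * w powr (a - 1) * poly (tw_deriv a q) w)" if "Re w > 0" for w
  proof -
    have "deriv F w = deriv (\<lambda>z. c * (exp (-z) * z powr a * poly q z)) w"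
      by (rule deriv_cong_ev) (use eventually_right_half_plane[OF that] F in \<open>auto elim!: eventually_mono\<close>)
    with weighted_poly_deriv[OF that] show ?thesis by simp
  qed
  have "deriv (deriv F) z
        = deriv (\<lambda>z. c * (exp (-z) * z powr (a - 1) * poly (tw_deriv a q) z)) z"
    by (rule deriv_cong_ev) (use eventually_right_half_plane[OF z] dF in \<open>auto elim!: eventually_mono\<close>)
  also have "\<dots> = c * (exp (-z) * z powr (a - 1 - 1) * poly (tw_deriv (a - 1) (tw_deriv a q)) z)"
    by (rule weighted_poly_deriv[OF z])
  finally have ddF: "deriv (deriv F) z = \<dots>" .
  have shift: "tw_deriv (a - 1) r = tw_deriv a r - r" for r
    by (simp add: tw_deriv_def algebra_simps smult_diff_left)
  have p1: "z powr a = z * z powr (a - 1)" and p2: "z powr (a - 1) = z * z powr (a - 1 - 1)"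
    using powr_minus_one_shift[OF z0] by blast+
  have "opA F z = - (z^2 * deriv (deriv F) z) - z * deriv F z + z^2 * F z"
    by (simp add: opA_def)
  also have "\<dots> = c * (exp (-z) * z powr (a - 1 - 1) * z^2 * (- poly (tw_deriv (a - 1)
      (tw_deriv a q)) z - poly (tw_deriv a q) z + z^2 * poly q z))"
    by (simp add: ddF dF[OF z] F[OF z] p1 p2 algebra_simps power2_eq_square)
  also have "- poly (tw_deriv (a - 1) (tw_deriv a q)) z - poly (tw_deriv a q) z + z^2 * poly q z
      = - poly (lop a q) z"
    by (simp add: shift lop_def mult_X2_pCons power2_eq_square)
  finally show ?thesis
    by (simp add: p1 p2 power2_eq_square algebra_simps)
qed

lemma opA_iter_weight:
  "Re z > 0 \<Longrightarrow> (opA ^^ n) (wgt a) z = (-1)^n * (exp (-z) * z powr a * poly (ppoly n a) z)"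
proof (induction n arbitrary: z)
  case 0
  then show ?case by (simp add: wgt_def ppoly_def)
next
  case (Suc n)
  then show ?case using opA_weighted_poly[of "(opA ^^ n) (wgt a)" "(-1)^n" a "ppoly n a" z]
    by (simp add: ppoly_Suc)
qed

lemma poly_eq_on_pos_reals:
  assumes "\<forall>x::real. x > 0 \<longrightarrow> poly p (of_real x) = poly q (of_real x)"
  shows "p = (q :: complex poly)"
proof (rule ccontr)
  assume "p \<noteq> q"
  then have "finite {x. poly (p - q) x = 0}" by (intro poly_roots_finite) simp
  moreover have "of_real ` {0::real<..} \<subseteq> {x. poly (p - q) x = 0}" using assms by auto
  ultimately have "finite (of_real ` {0::real<..} :: complex set)" using finite_subset by blast
  then have "finite {0::real<..}" by (rule finite_imageD) (auto intro: inj_onI)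
  then show False using infinite_Ioi[of "0::real"] by blast
qed

lemma pn_eq_ppoly: "pn n \<alpha> = ppoly n \<alpha>"
proof -
  let ?P = "\<lambda>q. \<forall>x::real. x > 0 \<longrightarrow> poly q (of_real x) = (-1)^n * exp (of_real x)
             * (of_real x) powr (- \<alpha>) * (opA ^^ n) (wgt \<alpha>) (of_real x)"
  have "?P (ppoly n \<alpha>)"
  proof (intro allI impI)
    fix x :: real assume "x > 0"
    define z where "z = complex_of_real x"
    have z: "Re z > 0" "z \<noteq> 0" using \<open>x > 0\<close> by (auto simp: z_def)
    have pw: "z powr (- \<alpha>) * z powr \<alpha> = 1"
      using z powr_add[of z "- \<alpha>" \<alpha>] by (simp add: powr_def)
    have ex: "exp z * exp (- z) = 1" by (simp add: exp_minus)
    have sg: "((-1::complex)^n) * (-1)^n = 1" by (simp flip: power_mult_distrib)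
    have "(-1)^n * exp z * z powr (- \<alpha>) * ((-1)^n * (exp (-z) * z powr \<alpha> * poly (ppoly n \<alpha>) z))
        = ((-1)^n * (-1)^n) * (exp z * exp (-z)) * (z powr (- \<alpha>) * z powr \<alpha>) * poly (ppoly n \<alpha>) z"
      by (simp only: ac_simps)
    also have "\<dots> = poly (ppoly n \<alpha>) z" by (simp only: pw ex sg mult_1)
    finally show "poly (ppoly n \<alpha>) (of_real x) = (-1)^n * exp (of_real x)
             * (of_real x) powr (- \<alpha>) * (opA ^^ n) (wgt \<alpha>) (of_real x)"
      using opA_iter_weight[OF z(1), of n \<alpha>] unfolding z_def by simp
  qed
  moreover have "q = ppoly n \<alpha>" if "?P q" for q
    using that \<open>?P (ppoly n \<alpha>)\<close> by (intro poly_eq_on_pos_reals) simp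
  ultimately show ?thesis unfolding pn_def by (rule the_equality)
qed

section \<open>Linear forms determined by a triangular basis\<close>

definition linear_form :: "('a::comm_ring_1 poly \<Rightarrow> 'a) \<Rightarrow> bool" where
  "linear_form u \<longleftrightarrow> (\<forall>f g. u (f + g) = u f + u g) \<and> (\<forall>c f. u (smult c f) = c * u f)"

text \<open>A family of monic polynomials with deg Q_k = k; such a family is a basis.\<close>
definition monic_triangular :: "(nat \<Rightarrow> 'a::comm_ring_1 poly) \<Rightarrow> bool" where
  "monic_triangular Q \<longleftrightarrow> (\<forall>k. coeff (Q k) k = 1 \<and> (\<forall>j>k. coeff (Q k) j = 0))"

lemma linear_form_zero: "linear_form u \<Longrightarrow> u 0 = 0"
  unfolding linear_form_def by (metis add_0 add_cancel_right_right)

lemma linear_form_diff: "linear_form u \<Longrightarrow> u (f - g) = u f - u g"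
  unfolding linear_form_def by (metis diff_add_cancel eq_diff_eq)

lemma linear_form_smult: "linear_form u \<Longrightarrow> u (smult c f) = c * u f"
  unfolding linear_form_def by blast

text \<open>Two linear forms agreeing on a monic triangular family agree everywhere: peel off the
  top coefficient of f with the basis element of that degree and induct on the degree bound.\<close>
lemma linear_forms_eq_on_basis:
  assumes Q: "monic_triangular Q" and u: "linear_form u" and v: "linear_form v"
    and eq: "\<And>k. u (Q k) = v (Q k)"
  shows "u = v"
proof -
  have bounded: "\<forall>f. (\<forall>j\<ge>n. coeff f j = 0) \<longrightarrow> u f = v f" for n
  proof (induction n)
    case 0
    show ?case
    proof (intro allI impI)
      fix f :: "'a poly" assume "\<forall>j\<ge>0. coeff f j = 0"
      then have "f = 0" by (intro poly_eqI) simp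
      then show "u f = v f" using linear_form_zero[OF u] linear_form_zero[OF v] by simp
    qed
  next
    case (Suc n)
    show ?case
    proof (intro allI impI)
      fix f :: "'a poly" assume f: "\<forall>j\<ge>Suc n. coeff f j = 0"
      define g where "g = f - smult (coeff f n) (Q n)"
      have "coeff g j = 0" if "j \<ge> n" for j
        using f Q that unfolding g_def monic_triangular_def
        by (cases "j = n") auto
      then have "u g = v g" using Suc by blast
      then have "u (g + smult (coeff f n) (Q n)) = v (g + smult (coeff f n) (Q n))"
        using u v eq unfolding linear_form_def by simp
      then show "u f = v f" by (simp add: g_def)
    qed
  qed
  show ?thesis
  proof
    fix f :: "'a poly"
    have "\<forall>j\<ge>Suc (degree f). coeff f j = 0" by (simp add: coeff_eq_0)
    with bounded show "u f = v f" by blast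
  qed
qed

text \<open>The moments m_j = u(x^j) of the dual form, computed from u(Q_j) = delta_(0,j).\<close>
function moment :: "(nat \<Rightarrow> 'a::comm_ring_1 poly) \<Rightarrow> nat \<Rightarrow> 'a" where
  "moment Q j = (if j = 0 then 1 else 0) - (\<Sum>i<j. coeff (Q j) i * moment Q i)"
  by auto
termination by (relation "Wellfounded.measure snd") auto
declare moment.simps[simp del]

definition moment_form :: "(nat \<Rightarrow> 'a::comm_ring_1 poly) \<Rightarrow> 'a poly \<Rightarrow> 'a" where
  "moment_form Q f = (\<Sum>i\<le>degree f. coeff f i * moment Q i)"

lemma moment_form_bound:
  assumes "\<forall>j\<ge>N. coeff f j = 0"
  shows "moment_form Q f = (\<Sum>i<N. coeff f i * moment Q i)"
proof -
  have "(\<Sum>i<max N (Suc (degree f)). coeff f i * moment Q i) = (\<Sum>i<N. coeff f i * moment Q i)"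
    by (rule sum.mono_neutral_right) (use assms in auto)
  moreover have "(\<Sum>i<max N (Suc (degree f)). coeff f i * moment Q i) = moment_form Q f"
    unfolding moment_form_def lessThan_Suc_atMost[symmetric]
    by (rule sum.mono_neutral_right) (auto simp: coeff_eq_0)
  ultimately show ?thesis by simp
qed

lemma linear_form_moment_form: "linear_form (moment_form Q)"
  unfolding linear_form_def
proof (intro conjI allI)
  fix f g :: "'a poly"
  define N where "N = Suc (degree f + degree g)"
  have f: "\<forall>j\<ge>N. coeff f j = 0" and g: "\<forall>j\<ge>N. coeff g j = 0"
    and fg: "\<forall>j\<ge>N. coeff (f + g) j = 0"
    by (auto simp: N_def coeff_eq_0)
  show "moment_form Q (f + g) = moment_form Q f + moment_form Q g"
    by (simp add: moment_form_bound[OF f] moment_form_bound[OF g] moment_form_bound[OF fg]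
        sum.distrib algebra_simps)
next
  fix c and f :: "'a poly"
  have f: "\<forall>j\<ge>Suc (degree f). coeff f j = 0"
    and cf: "\<forall>j\<ge>Suc (degree f). coeff (smult c f) j = 0"
    by (auto simp: coeff_eq_0)
  show "moment_form Q (smult c f) = c * moment_form Q f"
    by (simp add: moment_form_bound[OF f] moment_form_bound[OF cf] sum_distrib_left algebra_simps)
qed

lemma moment_form_basis:
  assumes Q: "monic_triangular Q"
  shows "moment_form Q (Q k) = (if k = 0 then 1 else 0)"
proof -
  have "\<forall>j\<ge>Suc k. coeff (Q k) j = 0" using Q unfolding monic_triangular_def by auto
  then have "moment_form Q (Q k) = (\<Sum>i<Suc k. coeff (Q k) i * moment Q i)"
    by (rule moment_form_bound)
  also have "\<dots> = coeff (Q k) k * moment Q k + (\<Sum>i<k. coeff (Q k) i * moment Q i)"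
    by simp
  also have "\<dots> = (if k = 0 then 1 else 0)"
    using Q moment.simps[of Q k] unfolding monic_triangular_def by simp
  finally show ?thesis .
qed

text \<open>Hence the form described by "THE u" in the definition of u0 exists, is unique, and has
  the defining properties.\<close>
lemma the_dual_form:
  assumes Q: "monic_triangular Q"
  defines "w \<equiv> THE u. (\<forall>f g. u (f + g) = u f + u g) \<and> (\<forall>c f. u (smult c f) = c * u f)
                 \<and> (\<forall>k. u (Q k) = (if k = 0 then 1 else 0))"
  shows "linear_form w \<and> (\<forall>k. w (Q k) = (if k = 0 then 1 else 0))"
proof -
  let ?D = "\<lambda>u. (\<forall>f g. u (f + g) = u f + u g) \<and> (\<forall>c f. u (smult c f) = c * u f)
                 \<and> (\<forall>k. u (Q k) = (if k = 0 then 1 else 0))"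
  have "?D (moment_form Q)"
    using linear_form_moment_form moment_form_basis[OF Q] unfolding linear_form_def by blast
  moreover have "u = moment_form Q" if "?D u" for u
    using that \<open>?D (moment_form Q)\<close>
    by (intro linear_forms_eq_on_basis[OF Q]) (auto simp: linear_form_def)
  ultimately have "?D w" unfolding w_def by (rule theI)
  then show ?thesis unfolding linear_form_def by blast
qed

section \<open>The canonical forms u0(a)\<close>

lemma pochhammer_half_nonzero:
  assumes "Re a > - 1/2"
  shows "(-2)^k * pochhammer (a + 1/2) k \<noteq> (0::complex)"
proof
  assume "(-2)^k * pochhammer (a + 1/2) k = 0"
  then obtain j where "a + 1/2 = - of_nat j" by (auto simp: pochhammer_eq_0_iff)
  then have "Re (a + 1/2) = Re (- of_nat j)" by (simp only:)
  then have "Re a + 1/2 = - real j" by simp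
  then show False using assms by simp
qed

lemma Pn_eq_ppoly:
  assumes "Re a > - 1/2"
  shows "ppoly k a = smult ((-2)^k * pochhammer (a + 1/2) k) (Pn k a)"
proof -
  let ?c = "(-2)^k * pochhammer (a + 1/2) k"
  have "?c * inverse ?c = 1" using pochhammer_half_nonzero[OF assms, of k] by (rule right_inverse)
  then show ?thesis by (simp only: Pn_def pn_eq_ppoly smult_smult smult_1_left)
qed

lemma monic_triangular_Pn:
  assumes "Re a > - 1/2"
  shows "monic_triangular (\<lambda>k. Pn k a)"
  unfolding monic_triangular_def Pn_def pn_eq_ppoly
  using ppoly_coeff[of _ a] pochhammer_half_nonzero[OF assms] by (auto simp: field_simps)

lemma u0_dual:
  assumes "Re a > - 1/2"
  shows "linear_form (u0 a)" and "u0 a (Pn k a) = (if k = 0 then 1 else 0)"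
  using the_dual_form[OF monic_triangular_Pn[OF assms]] unfolding u0_def by auto

lemma u0_ppoly:
  assumes "Re a > - 1/2"
  shows "u0 a (ppoly k a) = (if k = 0 then 1 else 0)"
  using u0_dual[OF assms] by (simp add: Pn_eq_ppoly[OF assms] linear_form_smult)

lemma u0_x_ppoly_shift:
  assumes a: "Re a > - 1/2"
  shows "u0 a ([:0, 1:] * ppoly k (a + 1)) = (if k = 0 then a^2 / (2 * a + 1) else 0)"
proof -
  have nz: "2 * a + 1 \<noteq> 0"
  proof
    assume "2 * a + 1 = 0"
    then have "Re (2 * a + 1) = 0" by simp
    then show False using a by simp
  qed
  have "[:0, 1:] * ppoly k (a + 1)
        = smult (inverse (2 * a + 1)) (smult (a^2) (ppoly k a) - ppoly (Suc k) a)"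
    using ppoly_shift_relation[of a k] nz by (metis smult_smult left_inverse smult_1_left)
  then have "u0 a ([:0, 1:] * ppoly k (a + 1))
        = inverse (2 * a + 1) * (a^2 * u0 a (ppoly k a) - u0 a (ppoly (Suc k) a))"
    using u0_dual(1)[OF a] by (simp add: linear_form_smult linear_form_diff)
  also have "\<dots> = (if k = 0 then a^2 / (2 * a + 1) else 0)"
    by (cases "k = 0") (simp_all add: u0_ppoly[OF a] divide_inverse mult.commute)
  finally show ?thesis .
qed

text \<open>Both sides are linear forms in f; they agree on the basis P_k(.;a+1), since P_k(.;a+1)
  is a nonzero multiple of p_k(a+1), so they coincide.\<close>
theorem mainTheorem11:
  fixes \<alpha> :: complex
  assumes "Re \<alpha> > - 1/2"
  shows "\<forall>f. u0 \<alpha> ([:0, 1:] * f) = (\<alpha>^2 / (2 * \<alpha> + 1)) * u0 (\<alpha> + 1) f"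
proof -
  have a1: "Re (\<alpha> + 1) > - 1/2" using assms by simp
  let ?c = "\<alpha>^2 / (2 * \<alpha> + 1)"
  have lhs: "linear_form (\<lambda>f. u0 \<alpha> ([:0, 1:] * f))"
    using u0_dual(1)[OF assms] unfolding linear_form_def
    by (simp only: distrib_left mult_smult_right) blast
  have rhs: "linear_form (\<lambda>f. ?c * u0 (\<alpha> + 1) f)"
    using u0_dual(1)[OF a1] unfolding linear_form_def by (simp add: distrib_left mult.left_commute)
  have "u0 \<alpha> ([:0, 1:] * Pn k (\<alpha> + 1)) = ?c * u0 (\<alpha> + 1) (Pn k (\<alpha> + 1))" for k
  proof -
    let ?s = "(-2)^k * pochhammer (\<alpha> + 1 + 1/2) k"
    have "?s * u0 \<alpha> ([:0, 1:] * Pn k (\<alpha> + 1)) = u0 \<alpha> ([:0, 1:] * ppoly k (\<alpha> + 1))"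
      by (simp only: Pn_eq_ppoly[OF a1] mult_smult_right linear_form_smult[OF u0_dual(1)[OF assms]])
    also have "\<dots> = ?s * (?c * u0 (\<alpha> + 1) (Pn k (\<alpha> + 1)))"
      using u0_x_ppoly_shift[OF assms, of k] u0_dual(2)[OF a1, of k] by simp
    finally show ?thesis by (rule mult_left_cancel[THEN iffD1, OF pochhammer_half_nonzero[OF a1]])
  qed
  then have "(\<lambda>f. u0 \<alpha> ([:0, 1:] * f)) = (\<lambda>f. ?c * u0 (\<alpha> + 1) f)"
    by (rule linear_forms_eq_on_basis[OF monic_triangular_Pn[OF a1] lhs rhs])
  then show ?thesis by metis
qed
end
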